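(* Let $M$ be an $n$-parameter module of finite total dimension, and let $F_\bullet\colon 0\to F_n\to\cdots\to F_1\to F_0$ be a free resolution of $M$ of length $n$ by finite-rank free modules. Fix chain contractions $s_{ij}$ of the complexes $\Omega_iF_\bullet$ for $0\le i<n$ (such contractions exist). Then the composite \[\varphi\colon F_0=\Omega_nF_0\xrightarrow{\;t_{n0n}\;}\Omega_0F_n\xrightarrow{\;\varepsilon_{F_n}\;}\nu F_n,\qquad t_{n0n}=s_{0,n-1}\kappa_{1,n-1}s_{1,n-2}\kappa_{2,n-2}\cdots s_{n-1,0}\kappa_{n,0},\] is a flat-injective presentation of $M$, i.e. $\operatorname{im}\varphi\cong M$.
   Context: Fix a field $k$ and $n\ge1$. An $n$-parameter module is a functor $M$ from the poset $\mathbb{Z}^n$ to $k$-vector spaces; its total dimension is $\sum_z\dim_k M_z$. Put $\mathbf 1=(1,\dots,1)$. Basic modules and classes: - For $z\in(\mathbb{Z}\cup\{-\infty\})^n$, $F(z)_v=k$ if $z\le v$ and $0$ otherwise. For $z\in(\mathbb{Z}\cup\{\infty\})^n$, $I(z)_v=k$ if $v\le z$ and $0$ otherwise. Structure maps are the identity between nonzero components. - Flat (resp. free, injective) modules are direct sums of modules $F(z)$ (resp. $F(z)$ with $z\in\mathbb{Z}^n$, resp. $I(z)$). - A free resolution of $M$ is an exact complex $\cdots\to F_1\to F_0$ of free modules with a surjection $F_0\to M$ whose kernel is $\operatorname{im}(F_1\to F_0)$. - A flat-injective presentation of $M$ is a morphism $\varphi\colon F\to I$ with $F$ flat, $I$ injective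 and $\operatorname{im}\varphi\cong M$. Operations on modules: - Tensor product: $(M\otimes N)_z=\bigl(\bigoplus_{v+w=z}M_v\otimes_kN_w\bigr)/\!\sim$, where $\sim$ is generated by $M_{v,v-u}(m)\otimes x\sim m\otimes N_{w,w-u}(x)$ for $u\ge0$. - Matlis dual: $(M^* )_z=\operatorname{Hom}_k(M_{-z},k)$. - Global dual: $(M^\dagger)_z=\operatorname{Hom}(M,F(-z))$. - Shift: $M\langle z\rangle_w=M_{w+z}$. - Nakayama functor: $\nu M=(M^\dagger)^*\langle\mathbf 1\rangle$. Čech complex: with $e_Q$ the vector having $-\infty$ at coordinates in $Q\subseteq\{1,\dots,n\}$ and $0$ elsewhere, - $\Omega_d=\bigoplus_{|Q|=n-d}F(e_Q)$ for $0\le d\le n$; - $\kappa_d\colon\Omega_d\to\Omega_{d-1}$ has component $F(e_Q)\to F(e_{Q\cup\{q\}})$ equal to $(-1)^{|\{p\in Q:p<q\}|}$ times the inclusion. Note $\Omega_n=F(0)$, so $\Omega_n\otimes F_0\cong F_0$. Double complex: $\Omega_iF_j=\Omega_i\otimes F_j$, $\kappa_{ij}=\kappa_i\otimes\mathrm{id}_{F_j}$ and $\partial_{ij}=\mathrm{id}\otimes\partial^F_j$. A chain contraction of $\Omega_iF_\bullet$ is a family $s_{ij}\colon\Omega_iF_j\to\Omega_iF_{j+1}$ with $\partial_{i,j+1}s_{ij}+s_{i,j-1}\partial_{ij}=\mathrm{id}$. Augmentation: $\varepsilon\colon\Omega_0=F(-\infty,\dots,-\infty)\to I(-\mathbf 1)$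 is the identity in components $z\le-\mathbf 1$. Then $\varepsilon_{F_n}\colon\Omega_0\otimes F_n\to\nu F_n$ is $\varepsilon\otimes F_n$ composed with the natural isomorphism $I(-\mathbf 1)\otimes F_n\cong\nu F_n$. *)

theory Defs
  imports Main "HOL-Library.Cardinality"
begin

text \<open>Points of Z^n are functions 'n => int (n = CARD('n)), ordered pointwise.
A module assigns to each point z a k-subspace of the vector space of
functions 'x => 'k (every k-vector space embeds in such a space), together
with structure maps mp u w for u <= w.\<close>

type_synonym 'n pt = "'n \<Rightarrow> int"

record ('n, 'x, 'k) pmod =
  sp :: "('n \<Rightarrow> int) \<Rightarrow> ('x \<Rightarrow> 'k) set"
  mp :: "('n \<Rightarrow> int) \<Rightarrow> ('n \<Rightarrow> int) \<Rightarrow> ('x \<Rightarrow> 'k) \<Rightarrow> ('x \<Rightarrow> 'k)"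

definition vzero :: "'x \<Rightarrow> 'k::zero" where "vzero = (\<lambda>_. 0)"
definition vadd :: "('x \<Rightarrow> 'k::plus) \<Rightarrow> ('x \<Rightarrow> 'k) \<Rightarrow> ('x \<Rightarrow> 'k)" where
  "vadd f g = (\<lambda>x. f x + g x)"
definition vsmul :: "'k::times \<Rightarrow> ('x \<Rightarrow> 'k) \<Rightarrow> ('x \<Rightarrow> 'k)" where
  "vsmul c f = (\<lambda>x. c * f x)"

definition pm_subspace :: "('x \<Rightarrow> 'k::field) set \<Rightarrow> bool" where
  "pm_subspace S \<longleftrightarrow> vzero \<in> S \<and> (\<forall>u\<in>S. \<forall>v\<in>S. vadd u v \<in> S) \<and> (\<forall>c. \<forall>u\<in>S. vsmul c u \<in> S)"

definition pm_linear :: "('x \<Rightarrow> 'k::field) set \<Rightarrow> ('y \<Rightarrow> 'k) set \<Rightarrow> (('x \<Rightarrow> 'k) \<Rightarrow> ('y \<Rightarrow> 'k)) \<Rightarrow> bool" where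
  "pm_linear S T f \<longleftrightarrow> (\<forall>u\<in>S. f u \<in> T) \<and> (\<forall>u\<in>S. \<forall>v\<in>S. f (vadd u v) = vadd (f u) (f v))
     \<and> (\<forall>c. \<forall>u\<in>S. f (vsmul c u) = vsmul c (f u))"

definition pmodule :: "('n, 'x, 'k::field) pmod \<Rightarrow> bool" where
  "pmodule M \<longleftrightarrow> (\<forall>z. pm_subspace (sp M z))
     \<and> (\<forall>u w. u \<le> w \<longrightarrow> pm_linear (sp M u) (sp M w) (mp M u w))
     \<and> (\<forall>z. \<forall>x\<in>sp M z. mp M z z x = x)
     \<and> (\<forall>u v w. u \<le> v \<longrightarrow> v \<le> w \<longrightarrow> (\<forall>x\<in>sp M u. mp M v w (mp M u v x) = mp M u w x))"

definition pmor :: "('n, 'x, 'k::field) pmod \<Rightarrow> ('n, 'y, 'k) pmod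
     \<Rightarrow> ('n pt \<Rightarrow> ('x \<Rightarrow> 'k) \<Rightarrow> ('y \<Rightarrow> 'k)) \<Rightarrow> bool" where
  "pmor M N h \<longleftrightarrow> (\<forall>z. pm_linear (sp M z) (sp N z) (h z))
     \<and> (\<forall>u w. u \<le> w \<longrightarrow> (\<forall>x\<in>sp M u. h w (mp M u w x) = mp N u w (h u x)))"

definition pm_iso :: "('n, 'x, 'k::field) pmod \<Rightarrow> ('n, 'y, 'k) pmod \<Rightarrow> bool" where
  "pm_iso M N \<longleftrightarrow> (\<exists>h. pmor M N h \<and> (\<forall>z. bij_betw (h z) (sp M z) (sp N z)))"

definition pm_image :: "('n, 'x, 'k) pmod \<Rightarrow> ('n, 'y, 'k) pmod
     \<Rightarrow> ('n pt \<Rightarrow> ('x \<Rightarrow> 'k) \<Rightarrow> ('y \<Rightarrow> 'k)) \<Rightarrow> ('n, 'y, 'k) pmod" where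
  "pm_image M N h = \<lparr> sp = (\<lambda>z. h z ` sp M z), mp = mp N \<rparr>"

definition pm_span :: "('x \<Rightarrow> 'k::field) set \<Rightarrow> ('x \<Rightarrow> 'k) set" where
  "pm_span B = {(\<lambda>x. \<Sum>b\<in>B. c b * b x) | c. True}"

text \<open>Finite total dimension: sum over z of dim M_z is finite, i.e. only finitely
many M_z are nonzero and each is finite-dimensional.\<close>
definition finite_total_dim :: "('n, 'x, 'k::field) pmod \<Rightarrow> bool" where
  "finite_total_dim M \<longleftrightarrow> finite {z. sp M z \<noteq> {vzero}}
     \<and> (\<forall>z. \<exists>B. finite B \<and> B \<subseteq> sp M z \<and> pm_span B = sp M z)"

text \<open>Extended points: None stands for -infinity (lower bounds) resp. +infinity (upper bounds).\<close>
definition lower_le :: "('n \<Rightarrow> int option) \<Rightarrow> 'n pt \<Rightarrow> bool" where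
  "lower_le b z \<longleftrightarrow> (\<forall>p. case b p of None \<Rightarrow> True | Some a \<Rightarrow> a \<le> z p)"

definition upper_ge :: "('n \<Rightarrow> int option) \<Rightarrow> 'n pt \<Rightarrow> bool" where
  "upper_ge c z \<longleftrightarrow> (\<forall>p. case c p of None \<Rightarrow> True | Some a \<Rightarrow> z p \<le> a)"

text \<open>Direct sum over x in X of F(b x), resp. of I(c x).\<close>
definition flat_sum :: "('x \<Rightarrow> 'n \<Rightarrow> int option) \<Rightarrow> 'x set \<Rightarrow> ('n, 'x, 'k::zero) pmod" where
  "flat_sum b X = \<lparr> sp = (\<lambda>z. {v. \<forall>x. (x \<notin> X \<or> \<not> lower_le (b x) z) \<longrightarrow> v x = 0}),
                    mp = (\<lambda>u w v. v) \<rparr>"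

definition inj_sum :: "('x \<Rightarrow> 'n \<Rightarrow> int option) \<Rightarrow> 'x set \<Rightarrow> ('n, 'x, 'k::zero) pmod" where
  "inj_sum c X = \<lparr> sp = (\<lambda>z. {v. \<forall>x. (x \<notin> X \<or> \<not> upper_ge (c x) z) \<longrightarrow> v x = 0}),
                   mp = (\<lambda>u w v. (\<lambda>x. if upper_ge (c x) w then v x else 0)) \<rparr>"

text \<open>gens j is the list of generator degrees of the finite-rank free module F_j.\<close>
definition freeF :: "(nat \<Rightarrow> 'n pt list) \<Rightarrow> nat \<Rightarrow> ('n, nat, 'k::zero) pmod" where
  "freeF gens j = flat_sum (\<lambda>l p. Some ((gens j ! l) p)) {..<length (gens j)}"

definition free_resolution :: "('n, 'b, 'k::field) pmod \<Rightarrow> nat \<Rightarrow> (nat \<Rightarrow> 'n pt list)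
   \<Rightarrow> (nat \<Rightarrow> 'n pt \<Rightarrow> (nat \<Rightarrow> 'k) \<Rightarrow> (nat \<Rightarrow> 'k)) \<Rightarrow> ('n pt \<Rightarrow> (nat \<Rightarrow> 'k) \<Rightarrow> ('b \<Rightarrow> 'k)) \<Rightarrow> bool" where
  "free_resolution M len gens d aug \<longleftrightarrow>
     pmor (freeF gens 0) M aug
   \<and> (\<forall>z. aug z ` sp (freeF gens 0) z = sp M z)
   \<and> (\<forall>j. 1 \<le> j \<and> j \<le> len \<longrightarrow> pmor (freeF gens j) (freeF gens (j - 1)) (d j))
   \<and> (\<forall>z. {x \<in> sp (freeF gens 0) z. aug z x = vzero} = d 1 z ` sp (freeF gens 1) z)
   \<and> (\<forall>j z. 1 \<le> j \<and> j < len \<longrightarrow>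
        {x \<in> sp (freeF gens j) z. d j z x = vzero} = d (Suc j) z ` sp (freeF gens (Suc j)) z)
   \<and> (\<forall>z. {x \<in> sp (freeF gens len) z. d len z x = vzero} = {vzero})"

text \<open>Omega_i (x) F_j = (+)_{|Q| = n-i} (+)_l F(e_Q) (x) F(g_l) = (+)_{Q,l} F(e_Q + g_l),
indexed by pairs (Q, l).\<close>
definition OmegaF :: "(nat \<Rightarrow> 'n::finite pt list) \<Rightarrow> nat \<Rightarrow> nat \<Rightarrow> ('n, 'n set \<times> nat, 'k::zero) pmod" where
  "OmegaF gens i j = flat_sum (\<lambda>(Q, l) p. if p \<in> Q then None else Some ((gens j ! l) p))
      {(Q, l). card Q = CARD('n) - i \<and> l < length (gens j)}"

definition cech_sign :: "'n::linorder set \<Rightarrow> 'n \<Rightarrow> 'k::comm_ring_1" where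
  "cech_sign Q q = (-1) ^ card {p \<in> Q. p < q}"

text \<open>kappa_ij = kappa_i (x) id_{F_j} : Omega_i F_j -> Omega_(i-1) F_j.\<close>
definition kappaF :: "(nat \<Rightarrow> 'n::{finite,linorder} pt list) \<Rightarrow> nat \<Rightarrow> nat \<Rightarrow> 'n pt
     \<Rightarrow> ('n set \<times> nat \<Rightarrow> 'k::field) \<Rightarrow> ('n set \<times> nat \<Rightarrow> 'k)" where
  "kappaF gens i j z v = (\<lambda>(Q, l). if card Q = CARD('n) - i + 1 \<and> l < length (gens j)
       then (\<Sum>q\<in>Q. cech_sign (Q - {q}) q * v (Q - {q}, l)) else 0)"

definition dmat :: "(nat \<Rightarrow> 'n pt list) \<Rightarrow> (nat \<Rightarrow> 'n pt \<Rightarrow> (nat \<Rightarrow> 'k::field) \<Rightarrow> (nat \<Rightarrow> 'k))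
     \<Rightarrow> nat \<Rightarrow> nat \<Rightarrow> nat \<Rightarrow> 'k" where
  "dmat gens d j m l = d j (gens j ! l) (\<lambda>l'. if l' = l then 1 else 0) m"

text \<open>partial_ij = id_{Omega_i} (x) d_j : Omega_i F_j -> Omega_i F_(j-1).\<close>
definition dOmega :: "(nat \<Rightarrow> 'n::finite pt list) \<Rightarrow> (nat \<Rightarrow> 'n pt \<Rightarrow> (nat \<Rightarrow> 'k::field) \<Rightarrow> (nat \<Rightarrow> 'k))
     \<Rightarrow> nat \<Rightarrow> nat \<Rightarrow> 'n pt \<Rightarrow> ('n set \<times> nat \<Rightarrow> 'k) \<Rightarrow> ('n set \<times> nat \<Rightarrow> 'k)" where
  "dOmega gens d i j z v = (\<lambda>(Q, m). if card Q = CARD('n) - i \<and> m < length (gens (j - 1))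
       then (\<Sum>l<length (gens j). dmat gens d j m l * v (Q, l)) else 0)"

definition chain_contraction :: "(nat \<Rightarrow> 'n::finite pt list) \<Rightarrow> (nat \<Rightarrow> 'n pt \<Rightarrow> (nat \<Rightarrow> 'k::field) \<Rightarrow> (nat \<Rightarrow> 'k))
     \<Rightarrow> (nat \<Rightarrow> nat \<Rightarrow> 'n pt \<Rightarrow> ('n set \<times> nat \<Rightarrow> 'k) \<Rightarrow> ('n set \<times> nat \<Rightarrow> 'k)) \<Rightarrow> nat \<Rightarrow> bool" where
  "chain_contraction gens d s i \<longleftrightarrow>
     (\<forall>j<CARD('n). pmor (OmegaF gens i j) (OmegaF gens i (Suc j)) (s i j))
   \<and> (\<forall>j\<le>CARD('n). \<forall>z. \<forall>x\<in>sp (OmegaF gens i j) z.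
        x = vadd (if j < CARD('n) then dOmega gens d i (Suc j) z (s i j z x) else vzero)
                 (if 0 < j then s i (j - 1) z (dOmega gens d i j z x) else vzero))"

text \<open>tcomp m : Omega_n F_0 -> Omega_(n-m) F_m, the partial composite
s_(n-m,m-1) kappa_(n-m+1,m-1) ... s_(n-1,0) kappa_(n,0); tcomp n = t_n0n.\<close>
primrec tcomp :: "(nat \<Rightarrow> 'n::{finite,linorder} pt list)
     \<Rightarrow> (nat \<Rightarrow> nat \<Rightarrow> 'n pt \<Rightarrow> ('n set \<times> nat \<Rightarrow> 'k::field) \<Rightarrow> ('n set \<times> nat \<Rightarrow> 'k))
     \<Rightarrow> nat \<Rightarrow> 'n pt \<Rightarrow> ('n set \<times> nat \<Rightarrow> 'k) \<Rightarrow> ('n set \<times> nat \<Rightarrow> 'k)" where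
  "tcomp gens s 0 = (\<lambda>z v. v)"
| "tcomp gens s (Suc m) = (\<lambda>z v. s (CARD('n) - Suc m) m z (kappaF gens (CARD('n) - m) m z (tcomp gens s m z v)))"

text \<open>Identification F_0 = Omega_n (x) F_0 (Omega_n = F(0), the summand with Q = {}).\<close>
definition iotaF :: "'n pt \<Rightarrow> (nat \<Rightarrow> 'k::zero) \<Rightarrow> ('n set \<times> nat \<Rightarrow> 'k)" where
  "iotaF z x = (\<lambda>(Q, l). if Q = {} then x l else 0)"

text \<open>nu F_n = (+)_l nu F(g_l) = (+)_l I(g_l - 1), with n = CARD('n).\<close>
definition nuF :: "(nat \<Rightarrow> 'n::finite pt list) \<Rightarrow> ('n, nat, 'k::zero) pmod" where
  "nuF gens = inj_sum (\<lambda>l p. Some ((gens (CARD('n)) ! l) p - 1)) {..<length (gens (CARD('n)))}"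

text \<open>epsilon_{F_n} : Omega_0 F_n = (+)_l F(-oo) -> nu F_n, identity on components that are nonzero
in the target (Omega_0 is the summand Q = UNIV).\<close>
definition epsF :: "(nat \<Rightarrow> 'n::finite pt list) \<Rightarrow> 'n pt \<Rightarrow> ('n set \<times> nat \<Rightarrow> 'k::zero) \<Rightarrow> (nat \<Rightarrow> 'k)" where
  "epsF gens z v = (\<lambda>l. if l < length (gens (CARD('n)))
        \<and> upper_ge (\<lambda>p. Some ((gens (CARD('n)) ! l) p - 1)) z then v (UNIV, l) else 0)"

definition phiF :: "(nat \<Rightarrow> 'n::{finite,linorder} pt list)
     \<Rightarrow> (nat \<Rightarrow> nat \<Rightarrow> 'n pt \<Rightarrow> ('n set \<times> nat \<Rightarrow> 'k::field) \<Rightarrow> ('n set \<times> nat \<Rightarrow> 'k))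
     \<Rightarrow> 'n pt \<Rightarrow> (nat \<Rightarrow> 'k) \<Rightarrow> (nat \<Rightarrow> 'k)" where
  "phiF gens s z x = epsF gens z (tcomp gens s (CARD('n)) z (iotaF z x))"

end

theory Submission
  imports Defs "HOL-Library.Function_Algebras"
begin

text \<open>Write \<open>t\<^sub>m(x) \<in> \<Omega>\<^sub>n\<^sub>-\<^sub>m F\<^sub>m\<close> for the image of \<open>x \<in> F\<^sub>0\<close> after the first \<open>m\<close> steps
  of \<open>t\<^sub>n\<^sub>0\<^sub>n\<close>. Since the \<open>s\<^sub>i\<^sub>j\<close> are contractions and \<open>\<kappa>\<close> commutes with \<open>\<partial>\<close>, each
  \<open>t\<^sub>m\<^sub>+\<^sub>1(x)\<close> is a \<open>\<partial>\<close>-lift of \<open>\<kappa> t\<^sub>m(x)\<close>. If \<open>x = d\<^sub>1 y\<close>, then every \<open>t\<^sub>m(x)\<close> is a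
  \<open>\<kappa>\<close>-boundary plus a \<open>\<partial>\<close>-boundary, so \<open>t\<^sub>n(x)\<close> lies in the image of \<open>\<kappa>\<close>, which \<open>\<epsilon>\<close> kills.
  Conversely, in each degree \<open>z\<close> the Cech columns \<open>\<Omega>\<^sub>\<bullet> \<otimes> F\<^sub>j\<close> are exact except at \<open>\<Omega>\<^sub>0\<close>, where
  \<open>\<epsilon>\<close> detects the homology exactly: on the summand of a generator \<open>g\<close>, adding to \<open>Q\<close> a
  coordinate \<open>q\<close> with \<open>g\<^sub>q \<le> z\<^sub>q\<close> is a contracting homotopy. So if \<open>\<phi>(x) = 0\<close> one can climb back
  up the staircase and find \<open>x \<in> im d\<^sub>1 = ker aug\<close>. Hence \<open>ker \<phi> = ker aug\<close>, and
  \<open>im \<phi> \<cong> F\<^sub>0 / ker aug \<cong> M\<close>.\<close>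

section \<open>Morphisms out of flat sums\<close>

lemma vadd_eq_plus: "vadd f g = f + g"
  by (auto simp: vadd_def)

lemma vzero_eq_zero: "vzero = 0"
  by (auto simp: vzero_def)

lemma sum_fun_apply: "(\<Sum>i\<in>I. f i) x = (\<Sum>i\<in>I. f i x :: 'a::comm_monoid_add)"
  by (induction I rule: infinite_finite_induct) auto

lemma mem_flat_sum_iff: "v \<in> sp (flat_sum b X) z \<longleftrightarrow> (\<forall>x. v x \<noteq> 0 \<longrightarrow> x \<in> X \<and> lower_le (b x) z)"
  unfolding flat_sum_def by auto

lemma mp_flat_sum [simp]: "mp (flat_sum b X) u w v = v"
  unfolding flat_sum_def by simp

lemma lower_le_mono: "lower_le b u \<Longrightarrow> u \<le> w \<Longrightarrow> lower_le b w"
  unfolding lower_le_def le_fun_def by (auto split: option.splits intro: order_trans)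

lemma mem_flat_sum_mono: "v \<in> sp (flat_sum b X) u \<Longrightarrow> u \<le> w \<Longrightarrow> v \<in> sp (flat_sum b X) w"
  unfolding mem_flat_sum_iff by (meson lower_le_mono)

context
  fixes b :: "'x \<Rightarrow> 'n \<Rightarrow> int option" and X :: "'x set" and z :: "'n pt"
begin

lemma zero_mem_flat_sum: "(0 :: 'x \<Rightarrow> 'k::ring) \<in> sp (flat_sum b X) z"
  by (simp add: mem_flat_sum_iff)

lemma add_mem_flat_sum:
  "v \<in> sp (flat_sum b X) z \<Longrightarrow> w \<in> sp (flat_sum b X) z \<Longrightarrow> v + w \<in> sp (flat_sum b X) z"
  for v w :: "'x \<Rightarrow> 'k::ring"
  unfolding mem_flat_sum_iff by (metis add.right_neutral add_0 plus_fun_apply)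

lemma diff_mem_flat_sum:
  "v \<in> sp (flat_sum b X) z \<Longrightarrow> w \<in> sp (flat_sum b X) z \<Longrightarrow> v - w \<in> sp (flat_sum b X) z"
  for v w :: "'x \<Rightarrow> 'k::ring"
  unfolding mem_flat_sum_iff by (metis diff_0_right diff_self minus_apply)

lemma smult_mem_flat_sum:
  "v \<in> sp (flat_sum b X) z \<Longrightarrow> (\<lambda>x. c * v x) \<in> sp (flat_sum b X) z"
  for v :: "'x \<Rightarrow> 'k::ring"
  unfolding mem_flat_sum_iff by (metis mult_zero_right)

lemma sum_mem_flat_sum:
  "finite I \<Longrightarrow> (\<And>i. i \<in> I \<Longrightarrow> f i \<in> sp (flat_sum b X) z) \<Longrightarrow> sum f I \<in> sp (flat_sum b X) z"
  for f :: "'i \<Rightarrow> 'x \<Rightarrow> 'k::ring"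
  by (induction I rule: finite_induct) (auto intro: add_mem_flat_sum zero_mem_flat_sum)

end

lemma pmor_mem: "pmor A B f \<Longrightarrow> x \<in> sp A z \<Longrightarrow> f z x \<in> sp B z"
  unfolding pmor_def pm_linear_def by blast

lemma pmor_add: "pmor A B f \<Longrightarrow> x \<in> sp A z \<Longrightarrow> y \<in> sp A z \<Longrightarrow> f z (x + y) = f z x + f z y"
  unfolding pmor_def pm_linear_def vadd_eq_plus by blast

lemma pmor_smult: "pmor A B f \<Longrightarrow> x \<in> sp A z \<Longrightarrow> f z (\<lambda>t. c * x t) = (\<lambda>t. c * f z x t)"
  unfolding pmor_def pm_linear_def vsmul_def by blast

lemma pmor_natural: "pmor A B f \<Longrightarrow> u \<le> w \<Longrightarrow> x \<in> sp A u \<Longrightarrow> f w (mp A u w x) = mp B u w (f u x)"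
  unfolding pmor_def by blast

lemma pmor_comp:
  assumes f: "pmor A B f" and g: "pmor B C g"
  shows "pmor A C (\<lambda>z x. g z (f z x))"
  unfolding pmor_def pm_linear_def vadd_eq_plus vsmul_def
  using pmor_mem[OF f] pmor_mem[OF g] pmor_add[OF f] pmor_add[OF g]
    pmor_smult[OF f] pmor_smult[OF g] pmor_natural[OF f] pmor_natural[OF g]
  by simp

lemma pmor_constI:
  assumes "\<And>u w x. mp A u w x = x" and "\<And>u w x. mp B u w x = x"
    and "\<And>z v. v \<in> sp A z \<Longrightarrow> f z v \<in> sp B z"
    and "\<And>z u v. f z (u + v) = f z u + f z v"
    and "\<And>z c u. f z (\<lambda>t. c * u t) = (\<lambda>t. c * f z u t)"
    and "\<And>u w x. f w x = f u x"
  shows "pmor A B f"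
  unfolding pmor_def pm_linear_def vadd_eq_plus vsmul_def using assms by metis

context
  fixes f :: "'n::order pt \<Rightarrow> ('x \<Rightarrow> 'k::field) \<Rightarrow> ('y \<Rightarrow> 'k)"
    and b :: "'x \<Rightarrow> 'n \<Rightarrow> int option" and X :: "'x set" and B :: "('n, 'y, 'k) pmod"
  assumes f: "pmor (flat_sum b X) B f"
begin

lemma pmor_diff:
  assumes x: "x \<in> sp (flat_sum b X) z" and y: "y \<in> sp (flat_sum b X) z"
  shows "f z (x - y) = f z x - f z y"
proof -
  have minus: "x - y = x + (\<lambda>t. (-1) * y t)"
    by (simp add: fun_eq_iff)
  have "f z (x - y) = f z x + f z (\<lambda>t. (-1) * y t)"
    unfolding minus by (rule pmor_add[OF f x smult_mem_flat_sum[OF y]])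
  also have "\<dots> = f z x + (\<lambda>t. (-1) * f z y t)"
    by (simp only: pmor_smult[OF f y])
  finally show ?thesis
    by (simp add: fun_eq_iff)
qed

lemma pmor_zero: "f z 0 = 0"
  using pmor_diff[OF zero_mem_flat_sum zero_mem_flat_sum] by simp

lemma pmor_sum:
  "finite I \<Longrightarrow> (\<And>i. i \<in> I \<Longrightarrow> g i \<in> sp (flat_sum b X) z) \<Longrightarrow> f z (sum g I) = (\<Sum>i\<in>I. f z (g i))"
proof (induction I rule: finite_induct)
  case (insert a I)
  have "f z (sum g (insert a I)) = f z (g a + sum g I)"
    by (simp only: sum.insert[OF insert.hyps(1,2)])
  also have "\<dots> = f z (g a) + f z (sum g I)"
    using insert.prems by (intro pmor_add[OF f] sum_mem_flat_sum[OF insert.hyps(1)]) auto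
  also have "\<dots> = f z (g a) + (\<Sum>i\<in>I. f z (g i))"
    using insert by simp
  finally show ?case
    by (simp only: sum.insert[OF insert.hyps(1,2)])
qed (simp add: pmor_zero)

end

lemma pmor_eq_iff_if_ker_eq:
  fixes f :: "'n::order pt \<Rightarrow> ('x \<Rightarrow> 'k::field) \<Rightarrow> ('y \<Rightarrow> 'k)"
    and g :: "'n pt \<Rightarrow> ('x \<Rightarrow> 'k) \<Rightarrow> ('c \<Rightarrow> 'k)"
  assumes f: "pmor (flat_sum b X) B f" and g: "pmor (flat_sum b X) C g"
    and kernel: "\<And>x. x \<in> sp (flat_sum b X) z \<Longrightarrow> f z x = 0 \<longleftrightarrow> g z x = 0"
    and x: "x \<in> sp (flat_sum b X) z" and y: "y \<in> sp (flat_sum b X) z"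
  shows "f z x = f z y \<longleftrightarrow> g z x = g z y"
  using kernel[OF diff_mem_flat_sum[OF x y]] pmor_diff[OF f x y] pmor_diff[OF g x y]
  by (metis eq_iff_diff_eq_0)

definition induced_map :: "('n, 'x, 'k) pmod \<Rightarrow> ('n pt \<Rightarrow> ('x \<Rightarrow> 'k) \<Rightarrow> ('y \<Rightarrow> 'k))
    \<Rightarrow> ('n pt \<Rightarrow> ('x \<Rightarrow> 'k) \<Rightarrow> ('c \<Rightarrow> 'k)) \<Rightarrow> 'n pt \<Rightarrow> ('y \<Rightarrow> 'k) \<Rightarrow> ('c \<Rightarrow> 'k)" where
  "induced_map A f g z y = g z (SOME x. x \<in> sp A z \<and> f z x = y)"

lemma induced_map_apply:
  assumes fibres: "\<And>x y. x \<in> sp A z \<Longrightarrow> y \<in> sp A z \<Longrightarrow> f z x = f z y \<Longrightarrow> g z x = g z y"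
    and x: "x \<in> sp A z"
  shows "induced_map A f g z (f z x) = g z x"
proof -
  have "(SOME x'. x' \<in> sp A z \<and> f z x' = f z x) \<in> sp A z
      \<and> f z (SOME x'. x' \<in> sp A z \<and> f z x' = f z x) = f z x"
    by (rule someI[of _ x]) (simp add: x)
  then show ?thesis
    unfolding induced_map_def using fibres x by blast
qed

lemma pmor_induced_map:
  fixes f :: "'n::order pt \<Rightarrow> ('x \<Rightarrow> 'k::field) \<Rightarrow> ('y \<Rightarrow> 'k)"
    and g :: "'n pt \<Rightarrow> ('x \<Rightarrow> 'k) \<Rightarrow> ('c \<Rightarrow> 'k)"
    and b :: "'x \<Rightarrow> 'n \<Rightarrow> int option" and X :: "'x set"
  defines "A \<equiv> flat_sum b X"
  assumes f: "pmor A B f" and g: "pmor A C g"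
    and fibres: "\<And>z x y. x \<in> sp A z \<Longrightarrow> y \<in> sp A z \<Longrightarrow> f z x = f z y \<Longrightarrow> g z x = g z y"
  shows "pmor (pm_image A B f) C (induced_map A f g)"
proof -
  have h_f: "induced_map A f g z (f z x) = g z x" if "x \<in> sp A z" for z x
    using fibres that by (blast intro: induced_map_apply)
  have image: "sp (pm_image A B f) z = f z ` sp A z" "mp (pm_image A B f) = mp B" for z
    unfolding pm_image_def by simp_all
  show ?thesis
    unfolding pmor_def pm_linear_def image vadd_eq_plus vsmul_def
  proof (intro conjI allI impI ballI, goal_cases)
    case (1 z y)
    then show ?case
      using h_f pmor_mem[OF g] by auto
  next
    case (2 z y1 y2)
    then obtain x1 x2 where x: "x1 \<in> sp A z" "x2 \<in> sp A z" "y1 = f z x1" "y2 = f z x2"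
      by blast
    have "x1 + x2 \<in> sp A z"
      using x add_mem_flat_sum unfolding A_def by blast
    then show ?case
      using x h_f[of "x1 + x2" z] h_f[of x1 z] h_f[of x2 z] pmor_add[OF f] pmor_add[OF g] by metis
  next
    case (3 z c y)
    then obtain x where x: "x \<in> sp A z" "y = f z x"
      by blast
    have "(\<lambda>t. c * x t) \<in> sp A z"
      using x smult_mem_flat_sum unfolding A_def by blast
    then show ?case
      using x h_f[of "\<lambda>t. c * x t" z] h_f[of x z] pmor_smult[OF f] pmor_smult[OF g] by metis
  next
    case (4 u w y)
    then obtain x where x: "x \<in> sp A u" "y = f u x"
      by blast
    have "x \<in> sp A w"
      using mem_flat_sum_mono x(1) 4(1) unfolding A_def by blast
    then show ?case
      using x h_f pmor_natural[OF f 4(1)] pmor_natural[OF g 4(1)] unfolding A_def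
      by (metis mp_flat_sum)
  qed
qed

lemma pm_iso_image_if_ker_eq:
  fixes f :: "'n::order pt \<Rightarrow> ('x \<Rightarrow> 'k::field) \<Rightarrow> ('y \<Rightarrow> 'k)"
    and g :: "'n pt \<Rightarrow> ('x \<Rightarrow> 'k) \<Rightarrow> ('c \<Rightarrow> 'k)"
  assumes f: "pmor (flat_sum b X) B f" and g: "pmor (flat_sum b X) C g"
    and onto: "\<And>z. g z ` sp (flat_sum b X) z = sp C z"
    and kernel: "\<And>z x. x \<in> sp (flat_sum b X) z \<Longrightarrow> f z x = 0 \<longleftrightarrow> g z x = 0"
  shows "pm_iso (pm_image (flat_sum b X) B f) C"
proof -
  note fibres = pmor_eq_iff_if_ker_eq[OF f g kernel]
  have "bij_betw (induced_map (flat_sum b X) f g z) (sp (pm_image (flat_sum b X) B f) z) (sp C z)"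
    for z
    using induced_map_apply[of "flat_sum b X" z f g] fibres onto[of z]
    unfolding pm_image_def bij_betw_def inj_on_def by (auto simp: image_image)
  then show ?thesis
    using pmor_induced_map[OF f g] fibres unfolding pm_iso_def by blast
qed

section \<open>The combinatorial Cech differential\<close>

lemma cech_sign_Diff_less:
  "finite Q \<Longrightarrow> q \<in> Q \<Longrightarrow> q < x \<Longrightarrow> cech_sign (Q - {q}) x = - (cech_sign Q x :: 'k::comm_ring_1)"
proof -
  assume Q: "finite Q" "q \<in> Q" "q < x"
  have "{p \<in> Q - {q}. p < x} = {p \<in> Q. p < x} - {q}" by auto
  moreover have "card {p \<in> Q. p < x} = Suc (card ({p \<in> Q. p < x} - {q}))"
    using Q card_Suc_Diff1[of "{p \<in> Q. p < x}" q] by simp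
  ultimately show ?thesis
    unfolding cech_sign_def by simp
qed

lemma cech_sign_Diff_not_less: "\<not> q < x \<Longrightarrow> cech_sign (Q - {q}) x = cech_sign Q x"
  unfolding cech_sign_def by (metis (mono_tags, lifting) DiffE DiffI singletonD Collect_cong)

lemma cech_sign_insert_less:
  "finite Q \<Longrightarrow> q \<notin> Q \<Longrightarrow> q < x \<Longrightarrow> cech_sign (insert q Q) x = - (cech_sign Q x :: 'k::comm_ring_1)"
proof -
  assume Q: "finite Q" "q \<notin> Q" "q < x"
  then have "{p \<in> insert q Q. p < x} = insert q {p \<in> Q. p < x}" by auto
  then show ?thesis
    unfolding cech_sign_def using Q by simp
qed

lemma cech_sign_insert_not_less: "\<not> q < x \<Longrightarrow> cech_sign (insert q Q) x = cech_sign Q x"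
  unfolding cech_sign_def by (metis (mono_tags, lifting) insert_iff Collect_cong)

lemma cech_sign_square: "cech_sign Q x * cech_sign Q x = (1::'k::comm_ring_1)"
  unfolding cech_sign_def by (simp add: power_mult_distrib[symmetric])

text \<open>Components of \<open>\<Omega>\<^sub>i \<otimes> F\<^sub>j\<close> are indexed by pairs \<open>(Q, l)\<close>; this is \<open>\<kappa>\<close> without the
  restriction to the summands of \<open>\<Omega>\<^sub>i \<otimes> F\<^sub>j\<close>, so that it commutes with everything in sight.\<close>

definition cech_diff :: "('n::{finite,linorder} set \<times> nat \<Rightarrow> 'k::comm_ring_1)
    \<Rightarrow> ('n set \<times> nat \<Rightarrow> 'k)" where
  "cech_diff v = (\<lambda>(Q, l). \<Sum>q\<in>Q. cech_sign (Q - {q}) q * v (Q - {q}, l))"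

text \<open>The standard contraction of the Cech complex of a simplex: on the summand \<open>l\<close> it adds the
  coordinate \<open>pivot l\<close> to \<open>Q\<close>.\<close>

definition cech_homotopy :: "(nat \<Rightarrow> 'n option) \<Rightarrow> ('n::{finite,linorder} set \<times> nat \<Rightarrow> 'k::comm_ring_1)
    \<Rightarrow> ('n set \<times> nat \<Rightarrow> 'k)" where
  "cech_homotopy pivot v = (\<lambda>(Q, l). case pivot l of None \<Rightarrow> 0
     | Some q0 \<Rightarrow> if q0 \<in> Q then 0 else cech_sign Q q0 * v (insert q0 Q, l))"

lemma cech_diff_add: "cech_diff (v + w) = cech_diff v + cech_diff w"
  unfolding cech_diff_def by (rule ext, clarify) (simp add: distrib_left sum.distrib)

lemma cech_diff_diff: "cech_diff (v - w) = cech_diff v - cech_diff w"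
  unfolding cech_diff_def by (rule ext, clarify) (simp add: right_diff_distrib sum_subtractf)

lemma cech_diff_zero [simp]: "cech_diff 0 = 0"
  unfolding cech_diff_def by (rule ext, clarify) simp

lemma cech_homotopy_zero [simp]: "cech_homotopy pivot 0 = 0"
  unfolding cech_homotopy_def by (rule ext, clarify) (simp split: option.splits)

text \<open>The terms of the double sum cancel in pairs \<open>(q, q')\<close>, \<open>(q', q)\<close>.\<close>

lemma cech_diff_cech_diff [simp]:
  fixes v :: "'n::{finite,linorder} set \<times> nat \<Rightarrow> 'k::comm_ring_1"
  shows "cech_diff (cech_diff v) = 0"
proof (rule ext, clarify)
  fix Q l
  define f where "f = (\<lambda>(q, q'). cech_sign (Q - {q}) q
    * (cech_sign (Q - {q} - {q'}) q' * v (Q - {q} - {q'}, l)))"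
  define P where "P = {(q, q'). q \<in> Q \<and> q' \<in> Q \<and> q < q'}"
  have cancel: "f (q, q') + f (q', q) = 0" if "(q, q') \<in> P" for q q'
  proof -
    have "q \<in> Q" "q < q'" "Q - {q'} - {q} = Q - {q} - {q'}"
      using that unfolding P_def by auto
    then show ?thesis
      unfolding f_def
      by (simp add: cech_sign_Diff_not_less cech_sign_Diff_less algebra_simps)
  qed
  have "Sigma Q (\<lambda>q. Q - {q}) = P \<union> prod.swap ` P"
    unfolding P_def by auto
  moreover have "P \<inter> prod.swap ` P = {}"
    unfolding P_def by auto
  ultimately have "sum f (Sigma Q (\<lambda>q. Q - {q})) = (\<Sum>x\<in>P. f x + f (prod.swap x))"
    by (simp add: sum.union_disjoint sum.reindex sum.distrib)
  also have "\<dots> = 0"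
    using cancel by (intro sum.neutral) auto
  finally have "(\<Sum>q\<in>Q. \<Sum>q'\<in>Q - {q}. f (q, q')) = 0"
    by (simp add: sum.Sigma)
  then show "cech_diff (cech_diff v) (Q, l) = 0 (Q, l)"
    unfolding cech_diff_def f_def by (simp add: sum_distrib_left)
qed

lemma cech_homotopy_identity_pivot_mem:
  fixes v :: "'n::{finite,linorder} set \<times> nat \<Rightarrow> 'k::comm_ring_1"
  assumes pivot: "pivot l = Some q0" and q0: "q0 \<in> Q"
  shows "cech_diff (cech_homotopy pivot v) (Q, l) = v (Q, l)"
proof -
  have "cech_diff (cech_homotopy pivot v) (Q, l) = (\<Sum>q\<in>Q. cech_sign (Q - {q}) q
      * (if q0 \<in> Q - {q} then 0 else cech_sign (Q - {q}) q0 * v (insert q0 (Q - {q}), l)))"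
    unfolding cech_diff_def cech_homotopy_def using pivot by simp
  also have "\<dots> = cech_sign (Q - {q0}) q0 * (cech_sign (Q - {q0}) q0 * v (insert q0 (Q - {q0}), l))"
    using q0 by (subst sum.remove[of _ q0]) (auto intro!: sum.neutral split: if_split_asm)
  also have "\<dots> = v (Q, l)"
    using q0 by (simp add: insert_absorb mult.assoc[symmetric] cech_sign_square)
  finally show ?thesis .
qed

lemma cech_homotopy_identity_pivot_not_mem:
  fixes v :: "'n::{finite,linorder} set \<times> nat \<Rightarrow> 'k::comm_ring_1"
  assumes pivot: "pivot l = Some q0" and q0: "q0 \<notin> Q"
  shows "cech_diff (cech_homotopy pivot v) (Q, l) + cech_homotopy pivot (cech_diff v) (Q, l)
    = v (Q, l)"
proof -
  let ?Q = "insert q0 Q"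
  define summand where "summand q = cech_sign (?Q - {q}) q * v (?Q - {q}, l)" for q
  have KH: "cech_diff (cech_homotopy pivot v) (Q, l)
      = (\<Sum>q\<in>Q. cech_sign (Q - {q}) q * (cech_sign (Q - {q}) q0 * v (?Q - {q}, l)))"
    unfolding cech_diff_def cech_homotopy_def using pivot q0
    by (auto intro!: sum.cong simp: insert_Diff_if)
  have HK: "cech_homotopy pivot (cech_diff v) (Q, l)
      = cech_sign Q q0 * (cech_sign Q q0 * v (Q, l) + (\<Sum>q\<in>Q. summand q))"
    unfolding cech_diff_def cech_homotopy_def summand_def using pivot q0 by simp
  have cancel: "cech_sign (Q - {q}) q * (cech_sign (Q - {q}) q0 * v (?Q - {q}, l))
      + cech_sign Q q0 * summand q = 0" if q: "q \<in> Q" for q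
  proof (cases "q < q0")
    case True
    then show ?thesis
      unfolding summand_def using q
      by (simp add: cech_sign_Diff_not_less cech_sign_Diff_less cech_sign_insert_not_less
          algebra_simps)
  next
    case False
    then have "q0 < q"
      using q q0 by (metis neq_iff)
    then show ?thesis
      unfolding summand_def using q q0 False
      by (simp add: cech_sign_Diff_not_less cech_sign_insert_less algebra_simps)
  qed
  show ?thesis
    unfolding KH HK distrib_left mult.assoc[symmetric] cech_sign_square sum_distrib_left
    using sum.neutral[of Q "\<lambda>q. _ q + cech_sign Q q0 * summand q"] cancel
    by (simp add: sum.distrib[symmetric] algebra_simps)
qed

lemma cech_homotopy_identity:
  fixes v :: "'n::{finite,linorder} set \<times> nat \<Rightarrow> 'k::comm_ring_1"
  assumes "\<And>l Q. pivot l = None \<Longrightarrow> v (Q, l) = 0"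
  shows "cech_diff (cech_homotopy pivot v) + cech_homotopy pivot (cech_diff v) = v"
proof (rule ext, clarify)
  fix Q l
  show "(cech_diff (cech_homotopy pivot v) + cech_homotopy pivot (cech_diff v)) (Q, l) = v (Q, l)"
  proof (cases "pivot l")
    case None
    then show ?thesis
      using assms unfolding cech_diff_def cech_homotopy_def by simp
  next
    case (Some q0)
    then show ?thesis
      using cech_homotopy_identity_pivot_mem[of pivot l q0 Q v]
        cech_homotopy_identity_pivot_not_mem[of pivot l q0 Q v] Some
      unfolding cech_homotopy_def by (cases "q0 \<in> Q") auto
  qed
qed

section \<open>The Cech columns and their exactness\<close>

lemma card_Diff_singleton_type:
  "q \<in> Q \<Longrightarrow> card (Q - {q}) = card Q - 1 \<and> 1 \<le> card (Q :: 'n::finite set)"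
  by (metis One_nat_def Suc_leI card_Diff_singleton card_gt_0_iff empty_iff finite)

definition unit_vec :: "nat \<Rightarrow> nat \<Rightarrow> 'k::zero_neq_one" where
  "unit_vec l = (\<lambda>t. if t = l then 1 else 0)"

locale generator_degrees =
  fixes gens :: "nat \<Rightarrow> 'n::{finite,linorder} pt list"
begin

lemma mem_OmegaF_iff: "v \<in> sp (OmegaF gens i j) z \<longleftrightarrow> (\<forall>Q l. v (Q, l) \<noteq> 0 \<longrightarrow>
    card Q = CARD('n) - i \<and> l < length (gens j) \<and> (\<forall>p. p \<notin> Q \<longrightarrow> (gens j ! l) p \<le> z p))"
  unfolding OmegaF_def mem_flat_sum_iff lower_le_def by (auto split: if_splits)

lemma mem_freeF_iff:
  "y \<in> sp (freeF gens j) z \<longleftrightarrow> (\<forall>l. y l \<noteq> 0 \<longrightarrow> l < length (gens j) \<and> gens j ! l \<le> z)"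
  unfolding freeF_def mem_flat_sum_iff lower_le_def le_fun_def by auto

lemma upper_ge_nuF:
  "upper_ge (\<lambda>p. Some ((gens CARD('n) ! l) p - 1)) z \<longleftrightarrow> (\<forall>p. z p < (gens CARD('n) ! l) p)"
  unfolding upper_ge_def by auto

lemma mp_OmegaF [simp]: "mp (OmegaF gens i j) u w v = v"
  by (simp add: OmegaF_def)

lemma mp_freeF [simp]: "mp (freeF gens j) u w y = y"
  by (simp add: freeF_def)

lemma uminus_mem_OmegaF: "v \<in> sp (OmegaF gens i j) z \<Longrightarrow> - v \<in> sp (OmegaF gens i j) z"
  for v :: "_ \<Rightarrow> 'k::ring"
  unfolding mem_OmegaF_iff by simp

lemma diff_mem_OmegaF:
  "v \<in> sp (OmegaF gens i j) z \<Longrightarrow> w \<in> sp (OmegaF gens i j) z \<Longrightarrow> v - w \<in> sp (OmegaF gens i j) z"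
  for v w :: "_ \<Rightarrow> 'k::ring"
  unfolding OmegaF_def by (rule diff_mem_flat_sum)

lemma kappaF_eq_cech_diff:
  assumes v: "v \<in> sp (OmegaF gens i j) z"
  shows "kappaF gens i j z v = cech_diff v"
proof (rule ext, clarify)
  fix Q l
  have "v (Q - {q}, l) = 0" if "q \<in> Q" "\<not> (card Q = CARD('n) - i + 1 \<and> l < length (gens j))" for q
    using v that card_Diff_singleton_type[OF that(1)] unfolding mem_OmegaF_iff by fastforce
  then show "kappaF gens i j z v (Q, l) = cech_diff v (Q, l)"
    unfolding kappaF_def cech_diff_def by (auto intro: sum.neutral[symmetric])
qed

lemma cech_diff_mem:
  assumes i: "1 \<le> i" "i \<le> CARD('n)" and v: "v \<in> sp (OmegaF gens i j) z"
  shows "cech_diff v \<in> sp (OmegaF gens (i - 1) j) z"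
  unfolding mem_OmegaF_iff
proof (intro allI impI)
  fix Q l
  assume "cech_diff v (Q, l) \<noteq> 0"
  then obtain q where q: "q \<in> Q" "v (Q - {q}, l) \<noteq> 0"
    unfolding cech_diff_def
    by (metis (no_types, lifting) case_prod_conv mult_zero_right sum.neutral)
  then show "card Q = CARD('n) - (i - 1) \<and> l < length (gens j) \<and> (\<forall>p. p \<notin> Q \<longrightarrow> (gens j ! l) p \<le> z p)"
    using v i card_Diff_singleton_type[OF q(1)] unfolding mem_OmegaF_iff by auto
qed

lemma kappaF_pmor:
  assumes "1 \<le> i" "i \<le> CARD('n)"
  shows "pmor (OmegaF gens i j) (OmegaF gens (i - 1) j) (kappaF gens i j :: _ \<Rightarrow> _ \<Rightarrow> _ \<Rightarrow> 'k::field)"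
proof (rule pmor_constI[OF mp_OmegaF mp_OmegaF])
  show "kappaF gens i j z v \<in> sp (OmegaF gens (i - 1) j) z" if "v \<in> sp (OmegaF gens i j) z" for z v
    using that kappaF_eq_cech_diff cech_diff_mem[OF assms] by metis
qed (auto simp: kappaF_def fun_eq_iff distrib_left sum.distrib sum_distrib_left mult.left_commute)

text \<open>Adding or removing a coordinate \<open>q\<close> with \<open>(g\<^sub>l)\<^sub>q \<le> z\<^sub>q\<close> keeps \<open>(Q, l)\<close> in the support
  of \<open>\<Omega>\<^sub>\<bullet> \<otimes> F\<^sub>j\<close> in degree \<open>z\<close>; such a \<open>q\<close> is the pivot of \<^const>\<open>cech_homotopy\<close>. It
  fails to exist only when \<open>z < g\<^sub>l\<close>, where only \<open>Q = UNIV\<close> contributes.\<close>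

definition pivot :: "nat \<Rightarrow> 'n pt \<Rightarrow> nat \<Rightarrow> 'n option" where
  "pivot j z l = (if \<exists>p. (gens j ! l) p \<le> z p then Some (SOME p. (gens j ! l) p \<le> z p) else None)"

lemma pivot_Some: "pivot j z l = Some q \<Longrightarrow> (gens j ! l) q \<le> z q"
  unfolding pivot_def by (auto split: if_splits intro: someI_ex)

lemma pivot_None: "pivot j z l = None \<Longrightarrow> z p < (gens j ! l) p"
  unfolding pivot_def by (auto split: if_splits simp: not_le)

lemma support_if_pivot_None:
  assumes "pivot j z l = None" "v \<in> sp (OmegaF gens i j) z" "v (Q, l) \<noteq> 0"
  shows "Q = UNIV \<and> i = 0"
proof -
  have "\<forall>p. p \<notin> Q \<longrightarrow> (gens j ! l) p \<le> z p"
    using assms(2,3) unfolding mem_OmegaF_iff by blast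
  then have "Q = UNIV"
    using pivot_None[OF assms(1)] by (metis UNIV_eq_I not_le)
  moreover have "card Q = CARD('n) - i"
    using assms(2,3) unfolding mem_OmegaF_iff by blast
  ultimately have "CARD('n) - i = CARD('n)"
    by simp
  moreover have "0 < CARD('n)"
    by simp
  ultimately show ?thesis
    using \<open>Q = UNIV\<close> by linarith
qed

lemma cech_homotopy_mem:
  assumes i: "i < CARD('n)" and v: "v \<in> sp (OmegaF gens i j) z"
  shows "cech_homotopy (pivot j z) v \<in> sp (OmegaF gens (Suc i) j) z"
  unfolding mem_OmegaF_iff
proof (intro allI impI)
  fix Q l
  assume "cech_homotopy (pivot j z) v (Q, l) \<noteq> 0"
  then obtain q0 where q0: "pivot j z l = Some q0" "q0 \<notin> Q" "v (insert q0 Q, l) \<noteq> 0"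
    unfolding cech_homotopy_def by (fastforce split: option.splits if_splits)
  then show "card Q = CARD('n) - Suc i \<and> l < length (gens j) \<and> (\<forall>p. p \<notin> Q \<longrightarrow> (gens j ! l) p \<le> z p)"
    using v pivot_Some[OF q0(1)] unfolding mem_OmegaF_iff by fastforce
qed

lemma cech_homotopy_top:
  assumes v: "v \<in> sp (OmegaF gens CARD('n) j) z"
  shows "cech_homotopy (pivot j z) v = 0"
proof (rule ext, clarify)
  fix Q l
  have "v (insert q0 Q, l) = 0" if "q0 \<notin> Q" for q0
    using v that unfolding mem_OmegaF_iff by fastforce
  then show "cech_homotopy (pivot j z) v (Q, l) = 0 (Q, l)"
    unfolding cech_homotopy_def by (simp split: option.splits)
qed

lemma cech_exact:
  assumes "1 \<le> i" "i \<le> CARD('n)" and v: "v \<in> sp (OmegaF gens i j) z" and "cech_diff v = 0"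
  shows "v = cech_diff (cech_homotopy (pivot j z) v)"
  using cech_homotopy_identity[of "pivot j z" v] support_if_pivot_None[OF _ v] assms by fastforce

lemma cech_injective_top:
  assumes v: "v \<in> sp (OmegaF gens CARD('n) j) z" and "cech_diff v = 0"
  shows "v = 0"
  using cech_exact[OF _ _ v] cech_homotopy_top[OF v] assms by simp

text \<open>At \<open>\<Omega>\<^sub>0\<close> the components with \<open>pivot = None\<close> survive, and \<open>\<epsilon>\<close> detects exactly these.\<close>

lemma cech_exact_bottom:
  assumes v: "v \<in> sp (OmegaF gens 0 CARD('n)) z" and eps: "epsF gens z v = 0"
  shows "v = cech_diff (cech_homotopy (pivot CARD('n) z) v)"
proof -
  have "v (Q - {q}, l) = 0" if "q \<in> Q" for Q q l
    using v that card_Diff_singleton_type[OF that] card_mono[of UNIV Q]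
    unfolding mem_OmegaF_iff by fastforce
  then have "cech_diff v = 0"
    unfolding cech_diff_def by (auto intro!: sum.neutral)
  moreover have "v (Q, l) = 0" if none: "pivot CARD('n) z l = None" for Q l
  proof (rule ccontr)
    assume nonzero: "v (Q, l) \<noteq> 0"
    then have "Q = UNIV" "l < length (gens CARD('n))"
      using support_if_pivot_None[OF none v] v unfolding mem_OmegaF_iff by blast+
    then have "epsF gens z v l = v (Q, l)"
      unfolding epsF_def upper_ge_nuF using pivot_None[OF none] by simp
    then show False
      using eps nonzero by simp
  qed
  ultimately show ?thesis
    using cech_homotopy_identity[of "pivot CARD('n) z" v] by simp
qed

lemma epsF_cech_diff:
  assumes w: "w \<in> sp (OmegaF gens 1 CARD('n)) z"
  shows "epsF gens z (cech_diff w) = 0"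
proof (rule ext)
  fix l
  have "w (UNIV - {q}, l) = 0" if "\<forall>p. z p < (gens CARD('n) ! l) p" for q
    using w that unfolding mem_OmegaF_iff by (auto simp: not_le[symmetric])
  then show "epsF gens z (cech_diff w) l = 0 l"
    unfolding epsF_def upper_ge_nuF cech_diff_def by simp
qed

lemma epsF_pmor: "pmor (OmegaF gens 0 CARD('n)) (nuF gens) (epsF gens :: _ \<Rightarrow> _ \<Rightarrow> _ \<Rightarrow> 'k::field)"
  unfolding pmor_def pm_linear_def vadd_eq_plus vsmul_def
proof (intro conjI allI impI ballI)
  fix u w :: "'n pt" and x :: "'n set \<times> nat \<Rightarrow> 'k"
  assume "u \<le> w"
  then have "(\<forall>p. w p < (gens CARD('n) ! l) p) \<Longrightarrow> (\<forall>p. u p < (gens CARD('n) ! l) p)" for l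
    unfolding le_fun_def by (meson order_le_less_trans)
  then show "epsF gens w (mp (OmegaF gens 0 CARD('n)) u w x) = mp (nuF gens) u w (epsF gens u x)"
    unfolding epsF_def nuF_def inj_sum_def upper_ge_nuF by (auto simp: fun_eq_iff)
qed (auto simp: epsF_def nuF_def inj_sum_def fun_eq_iff)

lemma iotaF_mem: "y \<in> sp (freeF gens j) z \<Longrightarrow> iotaF z y \<in> sp (OmegaF gens CARD('n) j) z"
  unfolding mem_OmegaF_iff mem_freeF_iff iotaF_def le_fun_def by (auto split: if_splits)

lemma iotaF_pmor: "pmor (freeF gens 0) (OmegaF gens CARD('n) 0) (iotaF :: _ \<Rightarrow> _ \<Rightarrow> _ \<Rightarrow> 'k::field)"
  by (rule pmor_constI[OF mp_freeF mp_OmegaF iotaF_mem]) (auto simp: iotaF_def fun_eq_iff)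

lemma iotaF_inj: "iotaF z x = iotaF z y \<Longrightarrow> x = y"
proof (rule ext)
  fix l
  assume "iotaF z x = iotaF z y"
  then have "iotaF z x ({}, l) = iotaF z y ({}, l)"
    by simp
  then show "x l = y l"
    by (simp add: iotaF_def)
qed

lemma OmegaF_top_eq_iotaF:
  assumes w: "w \<in> sp (OmegaF gens CARD('n) j) z"
  obtains y where "y \<in> sp (freeF gens j) z" "w = iotaF z y"
proof
  show "(\<lambda>l. w ({}, l)) \<in> sp (freeF gens j) z"
    using w unfolding mem_OmegaF_iff mem_freeF_iff le_fun_def by auto
  have "w (Q, l) = 0" if "Q \<noteq> {}" for Q l
    using w that unfolding mem_OmegaF_iff by auto
  then show "w = iotaF z (\<lambda>l. w ({}, l))"
    unfolding iotaF_def by (auto simp: fun_eq_iff)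
qed

lemma unit_vec_mem_freeF: "l < length (gens j) \<Longrightarrow> gens j ! l \<le> z \<Longrightarrow> unit_vec l \<in> sp (freeF gens j) z"
  unfolding mem_freeF_iff unit_vec_def by auto

lemma freeF_eq_sum_unit_vec:
  fixes y :: "nat \<Rightarrow> 'k::comm_ring_1"
  assumes y: "y \<in> sp (freeF gens j) z"
  shows "y = (\<Sum>l | l < length (gens j) \<and> gens j ! l \<le> z. (\<lambda>t. y l * unit_vec l t))"
proof (rule ext)
  fix t
  have "y t \<noteq> 0 \<Longrightarrow> t < length (gens j) \<and> gens j ! t \<le> z"
    using y unfolding mem_freeF_iff by blast
  then show "y t = (\<Sum>l | l < length (gens j) \<and> gens j ! l \<le> z. (\<lambda>t. y l * unit_vec l t)) t"
    unfolding sum_fun_apply unit_vec_def by (auto simp: sum.delta if_distrib cong: if_cong)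
qed

end

section \<open>The double complex of a resolution\<close>

locale contracted_resolution = generator_degrees gens
  for gens :: "nat \<Rightarrow> 'n::{finite,linorder} pt list" +
  fixes M :: "('n, 'b, 'k::field) pmod"
    and d :: "nat \<Rightarrow> 'n pt \<Rightarrow> (nat \<Rightarrow> 'k) \<Rightarrow> (nat \<Rightarrow> 'k)"
    and aug :: "'n pt \<Rightarrow> (nat \<Rightarrow> 'k) \<Rightarrow> ('b \<Rightarrow> 'k)"
    and s :: "nat \<Rightarrow> nat \<Rightarrow> 'n pt \<Rightarrow> ('n set \<times> nat \<Rightarrow> 'k) \<Rightarrow> ('n set \<times> nat \<Rightarrow> 'k)"
  assumes resolution: "free_resolution M CARD('n) gens d aug"
    and contraction: "\<forall>i<CARD('n). chain_contraction gens d s i"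
begin

abbreviation Omega :: "nat \<Rightarrow> nat \<Rightarrow> 'n pt \<Rightarrow> ('n set \<times> nat \<Rightarrow> 'k) set" where
  "Omega i j z \<equiv> sp (OmegaF gens i j) z"

abbreviation Free :: "nat \<Rightarrow> 'n pt \<Rightarrow> (nat \<Rightarrow> 'k) set" where
  "Free j z \<equiv> sp (freeF gens j) z"

lemma aug_pmor: "pmor (freeF gens 0) M aug"
  using resolution unfolding free_resolution_def by simp

lemma aug_onto: "aug z ` Free 0 z = sp M z"
  using resolution unfolding free_resolution_def by simp

lemma d_pmor: "1 \<le> j \<Longrightarrow> j \<le> CARD('n) \<Longrightarrow> pmor (freeF gens j) (freeF gens (j - 1)) (d j)"
  using resolution unfolding free_resolution_def by simp

lemma ker_aug:
  assumes "x \<in> Free 0 z"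
  shows "aug z x = 0 \<longleftrightarrow> x \<in> d 1 z ` Free 1 z"
proof -
  have "{x \<in> Free 0 z. aug z x = 0} = d 1 z ` Free 1 z"
    using resolution unfolding free_resolution_def vzero_eq_zero by simp
  then show ?thesis
    using assms by blast
qed

lemma ker_d:
  assumes "1 \<le> j" "j < CARD('n)" "x \<in> Free j z"
  shows "d j z x = 0 \<longleftrightarrow> x \<in> d (Suc j) z ` Free (Suc j) z"
proof -
  have "{x \<in> Free j z. d j z x = 0} = d (Suc j) z ` Free (Suc j) z"
    using resolution assms(1,2) unfolding free_resolution_def vzero_eq_zero by simp
  then show ?thesis
    using assms(3) by blast
qed

lemma dmat_eq: "dmat gens d j m l = d j (gens j ! l) (unit_vec l) m"
  unfolding dmat_def unit_vec_def ..

lemma d_unit_vec: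
  assumes j: "1 \<le> j" "j \<le> CARD('n)" and l: "l < length (gens j)" "gens j ! l \<le> z"
  shows "d j z (unit_vec l) = d j (gens j ! l) (unit_vec l)"
  using pmor_natural[OF d_pmor[OF j] l(2) unit_vec_mem_freeF[of l j, OF l(1) order_refl]]
  by simp

lemma d_eq_dmat:
  assumes j: "1 \<le> j" "j \<le> CARD('n)" and y: "y \<in> Free j z"
  shows "d j z y = (\<lambda>m. \<Sum>l<length (gens j). dmat gens d j m l * y l)"
proof -
  define L where "L = {l. l < length (gens j) \<and> gens j ! l \<le> z}"
  have L: "finite L" "L \<subseteq> {..<length (gens j)}"
    unfolding L_def by auto
  have unit: "unit_vec l \<in> sp (flat_sum (\<lambda>l p. Some ((gens j ! l) p)) {..<length (gens j)}) z"
    if "l \<in> L" for l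
    using that unit_vec_mem_freeF[of l j z] unfolding L_def freeF_def by simp
  have d: "pmor (flat_sum (\<lambda>l p. Some ((gens j ! l) p)) {..<length (gens j)})
      (freeF gens (j - 1)) (d j)"
    using d_pmor[OF j] unfolding freeF_def[of gens j] .
  have "d j z y = d j z (\<Sum>l\<in>L. (\<lambda>t. y l * unit_vec l t))"
    using freeF_eq_sum_unit_vec[OF y] unfolding L_def by simp
  also have "\<dots> = (\<Sum>l\<in>L. d j z (\<lambda>t. y l * unit_vec l t))"
    by (rule pmor_sum[OF d L(1) smult_mem_flat_sum[OF unit]])
  also have "\<dots> = (\<Sum>l\<in>L. (\<lambda>t. y l * d j (gens j ! l) (unit_vec l) t))"
  proof (rule sum.cong[OF refl])
    fix l
    assume l: "l \<in> L"
    then show "d j z (\<lambda>t. y l * unit_vec l t) = (\<lambda>t. y l * d j (gens j ! l) (unit_vec l) t)"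
      using pmor_smult[OF d unit[OF l]] d_unit_vec[OF j, of l z] unfolding L_def by simp
  qed
  finally have dy: "d j z y m = (\<Sum>l\<in>L. dmat gens d j m l * y l)" for m
    unfolding dmat_eq sum_fun_apply by (simp add: mult.commute)
  have "(\<Sum>l\<in>L. dmat gens d j m l * y l) = (\<Sum>l<length (gens j). dmat gens d j m l * y l)" for m
    using y L(2) unfolding L_def mem_freeF_iff by (intro sum.mono_neutral_left) auto
  then show ?thesis
    using dy by auto
qed

lemma dmat_nonzero:
  assumes j: "1 \<le> j" "j \<le> CARD('n)" and l: "l < length (gens j)" and "dmat gens d j m l \<noteq> 0"
  shows "m < length (gens (j - 1)) \<and> gens (j - 1) ! m \<le> gens j ! l"
  using pmor_mem[OF d_pmor[OF j] unit_vec_mem_freeF[of l j, OF l order_refl]] assms(4)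
  unfolding dmat_eq mem_freeF_iff by blast

lemma dmat_mult_dmat:
  assumes j: "2 \<le> j" "j \<le> CARD('n)" and l: "l < length (gens j)"
  shows "(\<Sum>k<length (gens (j - 1)). dmat gens d (j - 1) m k * dmat gens d j k l) = 0"
proof -
  define col where "col = d j (gens j ! l) (unit_vec l)"
  have j': "1 \<le> j" "1 \<le> j - 1" "j - 1 < CARD('n)" "Suc (j - 1) = j"
    using j by auto
  have unit: "unit_vec l \<in> Free j (gens j ! l)"
    by (rule unit_vec_mem_freeF[of l j, OF l order_refl])
  have col: "col \<in> Free (j - 1) (gens j ! l)"
    unfolding col_def by (rule pmor_mem[OF d_pmor[OF j'(1) j(2)] unit])
  have "d (j - 1) (gens j ! l) col = 0"
    using ker_d[OF j'(2,3) col] unit unfolding col_def j'(4) by blast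
  then show ?thesis
    using d_eq_dmat[OF j'(2) _ col] j unfolding col_def dmat_eq[of j] by (simp add: fun_eq_iff)
qed

lemma dOmega_mem:
  assumes j: "1 \<le> j" "j \<le> CARD('n)" and v: "v \<in> Omega i j z"
  shows "dOmega gens d i j z v \<in> Omega i (j - 1) z"
  unfolding mem_OmegaF_iff
proof (intro allI impI)
  fix Q m
  assume "dOmega gens d i j z v (Q, m) \<noteq> 0"
  then obtain l where c: "card Q = CARD('n) - i" "m < length (gens (j - 1))"
    and l: "l < length (gens j)" "dmat gens d j m l \<noteq> 0" "v (Q, l) \<noteq> 0"
    unfolding dOmega_def by (auto split: if_splits elim!: sum.not_neutral_contains_not_neutral)
  have "gens (j - 1) ! m \<le> gens j ! l"
    using dmat_nonzero[OF j l(1,2)] by blast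
  moreover have "\<forall>p. p \<notin> Q \<longrightarrow> (gens j ! l) p \<le> z p"
    using v l(3) unfolding mem_OmegaF_iff by blast
  ultimately show "card Q = CARD('n) - i \<and> m < length (gens (j - 1))
      \<and> (\<forall>p. p \<notin> Q \<longrightarrow> (gens (j - 1) ! m) p \<le> z p)"
    using c unfolding le_fun_def by (meson order_trans)
qed

lemma dOmega_dOmega:
  assumes j: "2 \<le> j" "j \<le> CARD('n)"
  shows "dOmega gens d i (j - 1) z (dOmega gens d i j z v) = 0"
proof (rule ext, clarify)
  fix Q m
  have "(\<Sum>k<length (gens (j - 1)).
        dmat gens d (j - 1) m k * (\<Sum>l<length (gens j). dmat gens d j k l * v (Q, l)))
      = (\<Sum>l<length (gens j).
        (\<Sum>k<length (gens (j - 1)). dmat gens d (j - 1) m k * dmat gens d j k l) * v (Q, l))"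
    by (simp add: sum_distrib_left sum_distrib_right mult.assoc) (rule sum.swap)
  also have "\<dots> = 0"
    using dmat_mult_dmat[OF j] by simp
  finally show "dOmega gens d i (j - 1) z (dOmega gens d i j z v) (Q, m) = 0 (Q, m)"
    unfolding dOmega_def by (auto intro!: sum.cong)
qed

lemma dOmega_diff: "dOmega gens d i j z (v - w) = dOmega gens d i j z v - dOmega gens d i j z w"
  unfolding dOmega_def by (auto simp: fun_eq_iff right_diff_distrib sum_subtractf)

lemma dOmega_zero [simp]: "dOmega gens d i j z 0 = 0"
  using dOmega_diff[of i j z 0 0] by simp

lemma dOmega_uminus: "dOmega gens d i j z (- v) = - dOmega gens d i j z v"
  using dOmega_diff[of i j z 0 v] by simp

lemma dOmega_cech_diff:
  assumes i: "1 \<le> i" "i \<le> CARD('n)"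
  shows "dOmega gens d (i - 1) j z (cech_diff v) = cech_diff (dOmega gens d i j z v)"
proof (rule ext, clarify)
  fix Q m
  show "dOmega gens d (i - 1) j z (cech_diff v) (Q, m) = cech_diff (dOmega gens d i j z v) (Q, m)"
  proof (cases "card Q = CARD('n) - i + 1 \<and> m < length (gens (j - 1))")
    case True
    then have "q \<in> Q \<Longrightarrow> card (Q - {q}) = CARD('n) - i" for q
      using card_Diff_singleton_type[of q Q] by simp
    then show ?thesis
      using True i unfolding dOmega_def cech_diff_def
      by (auto simp: sum_distrib_left mult.left_commute intro: sum.swap)
  next
    case False
    then have "dOmega gens d i j z v (Q - {q}, m) = 0" if "q \<in> Q" for q
      using card_Diff_singleton_type[OF that] unfolding dOmega_def by auto
    then show ?thesis
      using False i unfolding dOmega_def[of gens d "i - 1"] cech_diff_def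
      by (simp add: Suc_diff_le) blast
  qed
qed

lemma contraction_pmor:
  "i < CARD('n) \<Longrightarrow> j < CARD('n) \<Longrightarrow> pmor (OmegaF gens i j) (OmegaF gens i (Suc j)) (s i j)"
  using contraction unfolding chain_contraction_def by blast

lemma contraction_identity:
  assumes "i < CARD('n)" "j \<le> CARD('n)" "x \<in> Omega i j z"
  shows "x = (if j < CARD('n) then dOmega gens d i (Suc j) z (s i j z x) else 0)
           + (if 0 < j then s i (j - 1) z (dOmega gens d i j z x) else 0)"
  using contraction assms unfolding chain_contraction_def vadd_eq_plus vzero_eq_zero by blast

lemma contraction_mem:
  "i < CARD('n) \<Longrightarrow> j < CARD('n) \<Longrightarrow> x \<in> Omega i j z \<Longrightarrow> s i j z x \<in> Omega i (Suc j) z"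
  using pmor_mem[OF contraction_pmor] by blast

lemma contraction_zero: "i < CARD('n) \<Longrightarrow> j < CARD('n) \<Longrightarrow> s i j z 0 = 0"
  using pmor_zero[OF contraction_pmor[unfolded OmegaF_def]] by blast

lemma tcomp_pmor:
  "m \<le> CARD('n) \<Longrightarrow> pmor (OmegaF gens CARD('n) 0) (OmegaF gens (CARD('n) - m) m) (tcomp gens s m)"
proof (induction m)
  case 0
  show ?case
    by (simp, rule pmor_constI[OF mp_OmegaF mp_OmegaF]) auto
next
  case (Suc m)
  have m: "1 \<le> CARD('n) - m" "CARD('n) - m \<le> CARD('n)" "CARD('n) - Suc m < CARD('n)" "m < CARD('n)"
    using Suc.prems by auto
  have "pmor (OmegaF gens (CARD('n) - m) m) (OmegaF gens (CARD('n) - Suc m) m)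
      (kappaF gens (CARD('n) - m) m)"
    using kappaF_pmor[OF m(1,2), of m] by simp
  then show ?case
    using pmor_comp[OF pmor_comp[OF Suc.IH] contraction_pmor[OF m(3,4)]] Suc.prems by simp
qed

lemma phiF_pmor: "pmor (freeF gens 0) (nuF gens) (phiF gens s)"
proof -
  have "pmor (OmegaF gens CARD('n) 0) (OmegaF gens 0 CARD('n)) (tcomp gens s CARD('n))"
    using tcomp_pmor[of "CARD('n)"] by simp
  then show ?thesis
    using pmor_comp[OF pmor_comp[OF iotaF_pmor] epsF_pmor] unfolding phiF_def[abs_def] by blast
qed

lemma dOmega_iotaF:
  assumes y: "y \<in> Free 1 z"
  shows "dOmega gens d CARD('n) 1 z (iotaF z y) = iotaF z (d 1 z y)"
proof -
  have "d 1 z y \<in> Free 0 z"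
    using pmor_mem[OF d_pmor y] by simp
  then have "d 1 z y m = 0" if "\<not> m < length (gens 0)" for m
    using that unfolding mem_freeF_iff by auto
  then show ?thesis
    using d_eq_dmat[OF _ _ y] unfolding dOmega_def iotaF_def by (auto simp: fun_eq_iff)
qed

definition zigzag :: "'n pt \<Rightarrow> (nat \<Rightarrow> 'k) \<Rightarrow> nat \<Rightarrow> ('n set \<times> nat \<Rightarrow> 'k)" where
  "zigzag z x m = tcomp gens s m z (iotaF z x)"

lemma zigzag_mem: "x \<in> Free 0 z \<Longrightarrow> m \<le> CARD('n) \<Longrightarrow> zigzag z x m \<in> Omega (CARD('n) - m) m z"
  unfolding zigzag_def by (rule pmor_mem[OF tcomp_pmor iotaF_mem])

lemma zigzag_Suc:
  assumes x: "x \<in> Free 0 z" and m: "m < CARD('n)"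
  shows "zigzag z x (Suc m) = s (CARD('n) - Suc m) m z (cech_diff (zigzag z x m))"
  using kappaF_eq_cech_diff[OF zigzag_mem[OF x]] m unfolding zigzag_def by simp

lemma phiF_eq_epsF_zigzag: "phiF gens s z x = epsF gens z (zigzag z x CARD('n))"
  unfolding phiF_def zigzag_def ..

lemma dOmega_zigzag:
  assumes x: "x \<in> Free 0 z"
  shows "Suc k \<le> CARD('n) \<Longrightarrow>
    dOmega gens d (CARD('n) - Suc k) (Suc k) z (zigzag z x (Suc k)) = cech_diff (zigzag z x k)"
proof (induction k)
  case 0
  have "zigzag z x 0 \<in> Omega CARD('n) 0 z"
    using zigzag_mem[OF x, of 0] by simp
  then have "cech_diff (zigzag z x 0) \<in> Omega (CARD('n) - 1) 0 z"
    using cech_diff_mem[OF _ order_refl] by simp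
  then show ?case
    using contraction_identity[of "CARD('n) - 1" 0] zigzag_Suc[OF x, of 0] by simp
next
  case (Suc k)
  let ?i = "CARD('n) - Suc (Suc k)"
  let ?X = "cech_diff (zigzag z x (Suc k))"
  have k: "1 \<le> CARD('n) - Suc k" "CARD('n) - Suc k - 1 = ?i"
    using Suc.prems by auto
  have X: "?X \<in> Omega ?i (Suc k) z"
    using cech_diff_mem[OF k(1) _ zigzag_mem[OF x]] Suc.prems k(2) by simp
  have "dOmega gens d ?i (Suc k) z ?X = cech_diff (cech_diff (zigzag z x k))"
    using dOmega_cech_diff[OF k(1)] k(2) Suc by simp
  then have "dOmega gens d ?i (Suc k) z ?X = 0"
    by simp
  then have "?X = dOmega gens d ?i (Suc (Suc k)) z (s ?i (Suc k) z ?X)"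
    using contraction_identity[OF _ _ X] contraction_zero Suc.prems by simp
  then show ?case
    using zigzag_Suc[OF x, of "Suc k"] Suc.prems by simp
qed

subsection \<open>Boundaries are killed\<close>

lemma zigzag_of_boundary:
  assumes x: "x \<in> Free 0 z" and y: "y \<in> Free 1 z" and "x = d 1 z y"
  shows "m < CARD('n) \<Longrightarrow> \<exists>b u. u \<in> Omega (CARD('n) - m) (Suc m) z \<and>
            zigzag z x m = cech_diff b + dOmega gens d (CARD('n) - m) (Suc m) z u"
proof (induction m)
  case 0
  have "zigzag z x 0 = cech_diff 0 + dOmega gens d (CARD('n) - 0) (Suc 0) z (iotaF z y)"
    using dOmega_iotaF[OF y] assms(3) unfolding zigzag_def by simp
  then show ?case
    using iotaF_mem[OF y] by fastforce
next
  case (Suc m)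
  then obtain b u where u: "u \<in> Omega (CARD('n) - m) (Suc m) z"
    and a: "zigzag z x m = cech_diff b + dOmega gens d (CARD('n) - m) (Suc m) z u"
    using Suc_lessD by blast
  let ?i = "CARD('n) - Suc m"
  have m: "1 \<le> CARD('n) - m" "CARD('n) - m - 1 = ?i"
    using Suc.prems by auto
  have X: "cech_diff u \<in> Omega ?i (Suc m) z"
    using cech_diff_mem[OF m(1) _ u] m(2) by simp
  have "cech_diff (zigzag z x m) = dOmega gens d ?i (Suc m) z (cech_diff u)"
    unfolding a cech_diff_add using dOmega_cech_diff[OF m(1)] m(2) by simp
  then have "zigzag z x (Suc m) = s ?i m z (dOmega gens d ?i (Suc m) z (cech_diff u))"
    using zigzag_Suc[OF x] Suc.prems by simp
  also have "\<dots> = cech_diff u - dOmega gens d ?i (Suc (Suc m)) z (s ?i (Suc m) z (cech_diff u))"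
    using contraction_identity[OF _ _ X] Suc.prems by (simp add: algebra_simps)
  also have "\<dots> = cech_diff u + dOmega gens d ?i (Suc (Suc m)) z (- s ?i (Suc m) z (cech_diff u))"
    by (simp add: dOmega_uminus)
  finally show ?case
    using uminus_mem_OmegaF[OF contraction_mem[OF _ _ X]] Suc.prems by fastforce
qed

lemma phiF_eq_0_if_aug_eq_0:
  assumes x: "x \<in> Free 0 z" and "aug z x = 0"
  shows "phiF gens s z x = 0"
proof -
  obtain y where y: "y \<in> Free 1 z" "x = d 1 z y"
    using ker_aug[OF x] assms(2) by blast
  have n: "CARD('n) - 1 < CARD('n)" "Suc (CARD('n) - 1) = CARD('n)"
    by simp_all
  obtain b u where u: "u \<in> Omega 1 CARD('n) z"
    and a: "zigzag z x (CARD('n) - 1) = cech_diff b + dOmega gens d 1 CARD('n) z u"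
    using zigzag_of_boundary[OF x y n(1)] n by auto
  have X: "cech_diff u \<in> Omega 0 CARD('n) z"
    using cech_diff_mem[OF _ _ u] by simp
  have "zigzag z x CARD('n) = s 0 (CARD('n) - 1) z (cech_diff (zigzag z x (CARD('n) - 1)))"
    using zigzag_Suc[OF x n(1)] n by simp
  also have "cech_diff (zigzag z x (CARD('n) - 1)) = dOmega gens d 0 CARD('n) z (cech_diff u)"
    unfolding a cech_diff_add using dOmega_cech_diff[of 1] by simp
  also have "s 0 (CARD('n) - 1) z \<dots> = cech_diff u"
    using contraction_identity[OF _ _ X] by simp
  finally show ?thesis
    unfolding phiF_eq_epsF_zigzag using epsF_cech_diff[OF u] by simp
qed

subsection \<open>Only boundaries are killed\<close>

lemma cech_cycle_from_zigzag:
  assumes x: "x \<in> Free 0 z" and k: "k < CARD('n)" and w: "w \<in> Omega (CARD('n) - k) (Suc k) z"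
    and cycle: "dOmega gens d (CARD('n) - Suc k) (Suc k) z (zigzag z x (Suc k) - cech_diff w) = 0"
  shows "zigzag z x k - dOmega gens d (CARD('n) - k) (Suc k) z w \<in> Omega (CARD('n) - k) k z"
    and "cech_diff (zigzag z x k - dOmega gens d (CARD('n) - k) (Suc k) z w) = 0"
proof -
  have i: "1 \<le> CARD('n) - k" "CARD('n) - k - 1 = CARD('n) - Suc k"
    using k by auto
  have "dOmega gens d (CARD('n) - k) (Suc k) z w \<in> Omega (CARD('n) - k) k z"
    using dOmega_mem[OF _ _ w] k by simp
  then show "zigzag z x k - dOmega gens d (CARD('n) - k) (Suc k) z w \<in> Omega (CARD('n) - k) k z"
    using diff_mem_OmegaF[OF zigzag_mem[OF x]] k by simp
  have "cech_diff (zigzag z x k - dOmega gens d (CARD('n) - k) (Suc k) z w)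
      = cech_diff (zigzag z x k) - cech_diff (dOmega gens d (CARD('n) - k) (Suc k) z w)"
    by (rule cech_diff_diff)
  also have "\<dots> = dOmega gens d (CARD('n) - Suc k) (Suc k) z (zigzag z x (Suc k))
      - dOmega gens d (CARD('n) - Suc k) (Suc k) z (cech_diff w)"
    using dOmega_zigzag[OF x] dOmega_cech_diff[OF i(1)] i(2) k by simp
  also have "\<dots> = 0"
    using cycle unfolding dOmega_diff .
  finally show "cech_diff (zigzag z x k - dOmega gens d (CARD('n) - k) (Suc k) z w) = 0" .
qed

text \<open>Descending induction: the hypothesis says that \<open>t\<^sub>k\<^sub>+\<^sub>1(x)\<close> is a Cech boundary modulo
  \<open>\<partial>\<close>-cycles; exactness of the Cech column \<open>\<Omega>\<^sub>\<bullet>F\<^sub>k\<close> then moves this one step down, and at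
  \<open>k = 0\<close> the injectivity of \<open>\<kappa>\<close> on \<open>\<Omega>\<^sub>n\<close> shows \<open>x \<in> im d\<^sub>1\<close>.\<close>

lemma aug_eq_0_if_zigzag_cech_boundary:
  assumes x: "x \<in> Free 0 z"
  shows "k < CARD('n) \<Longrightarrow> w \<in> Omega (CARD('n) - k) (Suc k) z
     \<Longrightarrow> dOmega gens d (CARD('n) - Suc k) (Suc k) z (zigzag z x (Suc k) - cech_diff w) = 0
     \<Longrightarrow> aug z x = 0"
proof (induction k arbitrary: w)
  case (0 w)
  have "zigzag z x 0 = dOmega gens d CARD('n) 1 z w"
    using cech_injective_top cech_cycle_from_zigzag[OF x "0.prems"] by fastforce
  moreover obtain y where y: "y \<in> Free 1 z" "w = iotaF z y"
    using OmegaF_top_eq_iotaF[of w 1 z] "0.prems"(2) by auto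
  ultimately have "x = d 1 z y"
    using dOmega_iotaF[OF y(1)] iotaF_inj unfolding zigzag_def by simp
  then show ?case
    using ker_aug[OF x] y(1) by blast
next
  case (Suc k w)
  let ?i = "CARD('n) - Suc k"
  let ?v = "zigzag z x (Suc k) - dOmega gens d ?i (Suc (Suc k)) z w"
  have k: "1 \<le> ?i" "?i < CARD('n)"
    using Suc.prems(1) by auto
  have v: "?v \<in> Omega ?i (Suc k) z" and "cech_diff ?v = 0"
    using cech_cycle_from_zigzag[OF x Suc.prems] by simp_all
  then have "?v = cech_diff (cech_homotopy (pivot (Suc k) z) ?v)"
    using cech_exact[OF k(1) _ v] by simp
  then have "zigzag z x (Suc k) - cech_diff (cech_homotopy (pivot (Suc k) z) ?v)
      = dOmega gens d ?i (Suc (Suc k)) z w"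
    by (simp add: algebra_simps)
  then have cycle: "dOmega gens d (CARD('n) - Suc k) (Suc k) z
      (zigzag z x (Suc k) - cech_diff (cech_homotopy (pivot (Suc k) z) ?v)) = 0"
    using dOmega_dOmega[of "Suc (Suc k)"] Suc.prems(1) by simp
  have "cech_homotopy (pivot (Suc k) z) ?v \<in> Omega (CARD('n) - k) (Suc k) z"
    using cech_homotopy_mem[OF k(2) v] Suc.prems(1) by (simp add: Suc_diff_Suc)
  then show ?case
    using Suc.IH[OF _ _ cycle] Suc.prems(1) by simp
qed

lemma aug_eq_0_if_phiF_eq_0:
  assumes x: "x \<in> Free 0 z" and "phiF gens s z x = 0"
  shows "aug z x = 0"
proof -
  let ?w = "cech_homotopy (pivot CARD('n) z) (zigzag z x CARD('n))"
  have a: "zigzag z x CARD('n) \<in> Omega 0 CARD('n) z"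
    using zigzag_mem[OF x, of "CARD('n)"] by simp
  have "zigzag z x CARD('n) = cech_diff ?w"
    using cech_exact_bottom[OF a] assms(2) unfolding phiF_eq_epsF_zigzag by simp
  moreover have "?w \<in> Omega 1 CARD('n) z"
    using cech_homotopy_mem[OF _ a] by simp
  ultimately show ?thesis
    using aug_eq_0_if_zigzag_cech_boundary[OF x, of "CARD('n) - 1" ?w] by simp
qed

lemma ker_phiF_eq_ker_aug: "x \<in> Free 0 z \<Longrightarrow> phiF gens s z x = 0 \<longleftrightarrow> aug z x = 0"
  using phiF_eq_0_if_aug_eq_0 aug_eq_0_if_phiF_eq_0 by blast

lemma pm_iso_image_phiF: "pm_iso (pm_image (freeF gens 0) (nuF gens) (phiF gens s)) M"
  unfolding freeF_def
  by (rule pm_iso_image_if_ker_eq[OF phiF_pmor[unfolded freeF_def] aug_pmor[unfolded freeF_def]])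
    (use aug_onto ker_phiF_eq_ker_aug in \<open>simp_all add: freeF_def\<close>)

end

theorem corollary5p1:
  fixes M :: "('n::{finite,linorder}, 'b, 'k::field) pmod"
    and gens :: "nat \<Rightarrow> ('n \<Rightarrow> int) list"
    and d :: "nat \<Rightarrow> ('n \<Rightarrow> int) \<Rightarrow> (nat \<Rightarrow> 'k) \<Rightarrow> (nat \<Rightarrow> 'k)"
    and aug :: "('n \<Rightarrow> int) \<Rightarrow> (nat \<Rightarrow> 'k) \<Rightarrow> ('b \<Rightarrow> 'k)"
    and s :: "nat \<Rightarrow> nat \<Rightarrow> ('n \<Rightarrow> int) \<Rightarrow> ('n set \<times> nat \<Rightarrow> 'k) \<Rightarrow> ('n set \<times> nat \<Rightarrow> 'k)"
  assumes "pmodule M"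
    and "finite_total_dim M"
    and "free_resolution M CARD('n) gens d aug"
    and "\<forall>i<CARD('n). chain_contraction gens d s i"
  shows "pmor (freeF gens 0) (nuF gens) (phiF gens s)
       \<and> pm_iso (pm_image (freeF gens 0) (nuF gens) (phiF gens s)) M"
proof -
  interpret contracted_resolution gens M d aug s
    using assms(3,4) by unfold_locales
  show ?thesis
    using phiF_pmor pm_iso_image_phiF by blast
qed

end
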